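(* Let $M=(E,\mathcal{I})$ be a matroid, $\Delta$ a nonnegative integer, $w:E\to\{-\Delta,\dots,\Delta\}$ integer weights and $\mu\ge0$. Let $A,B\in\mathcal{I}$ be disjoint with $|A|=|B|=k$ and $|w(A)-w(B)|\le\mu$. Then there exist subsets $A'\subseteq A$ and $B'\subseteq B$ of equal cardinality such that (i) $(A\setminus A')\cup B'\in\mathcal{I}$, (ii) $|A'|=|B'|\ge (k-\mu)/(2\Delta+1)^2$, and (iii) $w(a)\ge w(b)$ for each $a\in A'$ and $b\in B'$.
   Context: $w(S)=\sum_{e\in S}w(e)$ for $S\subseteq E$. *)

theory Defs
  imports Complex_Main
begin

definition matroid :: "'a set \<Rightarrow> ('a set \<Rightarrow> bool) \<Rightarrow> bool" where
  "matroid E indep \<longleftrightarrow>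
     finite E \<and>
     (\<forall>X. indep X \<longrightarrow> X \<subseteq> E) \<and>
     indep {} \<and>
     (\<forall>X Y. indep Y \<and> X \<subseteq> Y \<longrightarrow> indep X) \<and>
     (\<forall>X Y. indep X \<and> indep Y \<and> card X < card Y \<longrightarrow> (\<exists>e\<in>Y - X. indep (insert e X)))"

end

theory Submission
  imports Defs
begin

text \<open>For a threshold t let X = {a \<in> A. w a < t} and Y = {b \<in> B. w b \<le> t}. Augmenting X first
  by |Y| - |X| elements of Y and then by elements of A up to size |A| leaves out exactly |Y| - |X|
  elements of A, all of weight \<ge> t, which are thereby exchanged against elements of Y, all of
  weight \<le> t. Summed over the 2\<Delta> + 1 thresholds t \<in> [-\<Delta>, \<Delta>], |Y| - |X| adds up to
  k + w(A) - w(B) \<ge> k - \<mu>, so the best threshold even yields (k - \<mu>) / (2\<Delta> + 1).\<close>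

lemma matroid_indep_subset_ground: "matroid E indep \<Longrightarrow> indep X \<Longrightarrow> X \<subseteq> E"
  unfolding matroid_def by blast

lemma matroid_indep_finite: "matroid E indep \<Longrightarrow> indep X \<Longrightarrow> finite X"
  unfolding matroid_def by (meson finite_subset)

lemma matroid_indep_subset: "matroid E indep \<Longrightarrow> indep Y \<Longrightarrow> X \<subseteq> Y \<Longrightarrow> indep X"
  unfolding matroid_def by blast

lemma matroid_augment:
  "matroid E indep \<Longrightarrow> indep X \<Longrightarrow> indep Y \<Longrightarrow> card X < card Y \<Longrightarrow> \<exists>e\<in>Y - X. indep (insert e X)"
  unfolding matroid_def by blast

lemma matroid_augment_card:
  assumes M: "matroid E indep" and I: "indep I" and Y: "indep Y"
    and "m \<le> card Y - card I"
  shows "\<exists>Z \<subseteq> Y - I. card Z = m \<and> indep (I \<union> Z)"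
  using assms(4)
proof (induction m)
  case 0
  show ?case using I by (intro exI[of _ "{}"]) auto
next
  case (Suc m)
  then have "m \<le> card Y - card I" by simp
  then obtain Z where Z: "Z \<subseteq> Y - I" "card Z = m" "indep (I \<union> Z)" using Suc.IH by blast
  have fin: "finite (I \<union> Z)" using matroid_indep_finite[OF M Z(3)] .
  have "I \<inter> Z = {}" using Z(1) by blast
  then have "card (I \<union> Z) = card I + m" using fin Z(2) by (simp add: card_Un_disjoint)
  then have "card (I \<union> Z) < card Y" using Suc.prems by simp
  then obtain e where e: "e \<in> Y - (I \<union> Z)" "indep (insert e (I \<union> Z))"
    using matroid_augment[OF M Z(3) Y] by blast
  show ?case
  proof (intro exI[of _ "insert e Z"] conjI)
    show "insert e Z \<subseteq> Y - I" using e Z by auto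
    show "card (insert e Z) = Suc m" using e Z fin by auto
    show "indep (I \<union> insert e Z)" using e by simp
  qed
qed

lemma matroid_exchange:
  assumes M: "matroid E indep" and A: "indep A" and Y: "indep Y"
    and XA: "X \<subseteq> A" and YA: "card Y \<le> card A"
  obtains A' B' where "A' \<subseteq> A - X" "B' \<subseteq> Y" "card A' = card Y - card X"
    "card B' = card Y - card X" "indep ((A - A') \<union> B')"
proof -
  define m where "m = card Y - card X"
  have finA: "finite A" using matroid_indep_finite[OF M A] .
  have finX: "finite X" using finA XA finite_subset by blast
  have X: "indep X" using matroid_indep_subset[OF M A XA] .
  have cXA: "card X \<le> card A" using card_mono[OF finA XA] .
  obtain Z where Z: "Z \<subseteq> Y - X" "card Z = m" "indep (X \<union> Z)"
    using matroid_augment_card[OF M X Y, of m] unfolding m_def by blast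
  have cXZ: "card (X \<union> Z) = card X + m"
    using Z finX matroid_indep_finite[OF M Z(3)] by (subst card_Un_disjoint) auto
  obtain Z' where Z': "Z' \<subseteq> A - (X \<union> Z)" "card Z' = card A - (card X + m)"
      "indep (X \<union> Z \<union> Z')"
    using matroid_augment_card[OF M Z(3) A, of "card A - (card X + m)"] cXZ by auto
  define A' where "A' = A - (X \<union> Z')"
  have "card (X \<union> Z') = card X + card Z'"
    using Z'(1) finX finA by (intro card_Un_disjoint) (auto intro: finite_subset)
  moreover have "card A' = card A - card (X \<union> Z')"
    unfolding A'_def using XA Z'(1) finA by (intro card_Diff_subset) (auto intro: finite_subset)
  ultimately have "card A' = m" using Z'(2) cXA YA unfolding m_def by linarith
  moreover have "(A - A') \<union> Z = X \<union> Z \<union> Z'" using XA Z' unfolding A'_def by auto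
  ultimately show ?thesis
    using that[of A' Z] Z Z' unfolding A'_def m_def by auto
qed

lemma matroid_threshold_exchange:
  fixes w :: "'a \<Rightarrow> 'b::linorder"
  assumes M: "matroid E indep" and A: "indep A" and B: "indep B" and BA: "card B \<le> card A"
  obtains A' B' where "A' \<subseteq> A" "B' \<subseteq> B" "card A' = card B'" "indep ((A - A') \<union> B')"
    "\<forall>a\<in>A'. \<forall>b\<in>B'. w b \<le> w a"
    "int (card {b\<in>B. w b \<le> t}) - int (card {a\<in>A. w a < t}) \<le> int (card A')"
proof -
  define X where "X = {a\<in>A. w a < t}"
  define Y where "Y = {b\<in>B. w b \<le> t}"
  have Y: "indep Y" using matroid_indep_subset[OF M B] unfolding Y_def by auto
  have XA: "X \<subseteq> A" unfolding X_def by auto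
  have "card Y \<le> card B"
    using matroid_indep_finite[OF M B] unfolding Y_def by (intro card_mono) auto
  with BA have YA: "card Y \<le> card A" by linarith
  obtain A' B' where A': "A' \<subseteq> A - X" and B': "B' \<subseteq> Y"
      and card: "card A' = card Y - card X" "card B' = card Y - card X"
      and indep: "indep ((A - A') \<union> B')"
    by (rule matroid_exchange[OF M A Y XA YA])
  show ?thesis
  proof (rule that[of A' B'])
    show "A' \<subseteq> A" "B' \<subseteq> B" using A' B' unfolding Y_def by auto
    show "card A' = card B'" "indep ((A - A') \<union> B')" using card indep by simp_all
    show "\<forall>a\<in>A'. \<forall>b\<in>B'. w b \<le> w a"
    proof (intro ballI)
      fix a b assume "a \<in> A'" "b \<in> B'"
      then have "t \<le> w a" "w b \<le> t" using A' B' unfolding X_def Y_def by auto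
      then show "w b \<le> w a" by (rule order_trans[rotated])
    qed
    show "int (card {b\<in>B. w b \<le> t}) - int (card {a\<in>A. w a < t}) \<le> int (card A')"
      using card(1) unfolding X_def Y_def by linarith
  qed
qed

lemma sum_card_filter_swap:
  assumes "finite A" "finite T"
  shows "(\<Sum>t\<in>T. of_nat (card {a\<in>A. P a t}) :: 'b::semiring_1)
    = (\<Sum>a\<in>A. of_nat (card {t\<in>T. P a t}))"
proof -
  have "(\<Sum>t\<in>T. of_nat (card {a\<in>A. P a t}) :: 'b) = (\<Sum>t\<in>T. \<Sum>a\<in>A. of_bool (P a t))"
    using assms by (simp add: Collect_conj_eq)
  also have "\<dots> = (\<Sum>a\<in>A. \<Sum>t\<in>T. of_bool (P a t))" by (rule sum.swap)
  also have "\<dots> = (\<Sum>a\<in>A. of_nat (card {t\<in>T. P a t}))"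
    using assms by (simp add: Collect_conj_eq)
  finally show ?thesis .
qed

lemma sum_card_weight_le:
  fixes w :: "'a \<Rightarrow> int"
  assumes "finite B" "\<forall>b\<in>B. - D \<le> w b \<and> w b \<le> D"
  shows "(\<Sum>t\<in>{-D..D}. int (card {b\<in>B. w b \<le> t})) = (D + 1) * int (card B) - sum w B"
proof -
  have "(\<Sum>t\<in>{-D..D}. int (card {b\<in>B. w b \<le> t})) = (\<Sum>b\<in>B. int (card {t\<in>{-D..D}. w b \<le> t}))"
    by (rule sum_card_filter_swap[OF assms(1) finite_atLeastAtMost_int])
  also have "\<dots> = (\<Sum>b\<in>B. D - w b + 1)"
  proof (rule sum.cong)
    fix b assume "b \<in> B"
    then have "{t\<in>{-D..D}. w b \<le> t} = {w b..D}" using assms(2) by auto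
    then show "int (card {t\<in>{-D..D}. w b \<le> t}) = D - w b + 1" using \<open>b \<in> B\<close> assms(2) by simp
  qed simp
  also have "\<dots> = (D + 1) * int (card B) - sum w B"
    by (simp add: sum.distrib sum_subtractf algebra_simps)
  finally show ?thesis .
qed

lemma sum_card_weight_less:
  fixes w :: "'a \<Rightarrow> int"
  assumes "finite A" "\<forall>a\<in>A. - D \<le> w a \<and> w a \<le> D"
  shows "(\<Sum>t\<in>{-D..D}. int (card {a\<in>A. w a < t})) = D * int (card A) - sum w A"
proof -
  have "(\<Sum>t\<in>{-D..D}. int (card {a\<in>A. w a < t})) = (\<Sum>a\<in>A. int (card {t\<in>{-D..D}. w a < t}))"
    by (rule sum_card_filter_swap[OF assms(1) finite_atLeastAtMost_int])
  also have "\<dots> = (\<Sum>a\<in>A. D - w a)"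
  proof (rule sum.cong)
    fix a assume "a \<in> A"
    then have "{t\<in>{-D..D}. w a < t} = {w a + 1..D}" using assms(2) by auto
    then show "int (card {t\<in>{-D..D}. w a < t}) = D - w a" using \<open>a \<in> A\<close> assms(2) by simp
  qed simp
  also have "\<dots> = D * int (card A) - sum w A"
    by (simp add: sum_subtractf algebra_simps)
  finally show ?thesis .
qed

lemma exists_max_on_finite:
  fixes f :: "'a \<Rightarrow> 'b::linorder"
  assumes "finite S" "S \<noteq> {}"
  obtains t where "t \<in> S" "\<forall>s\<in>S. f s \<le> f t"
proof -
  have "Max (f ` S) \<in> f ` S" using assms by simp
  then obtain t where "t \<in> S" "f t = Max (f ` S)" by auto
  then show ?thesis using that assms by simp
qed

lemma exists_good_threshold:
  fixes w :: "'a \<Rightarrow> int" and D :: int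
  assumes "finite A" "finite B" "card A = card B" "0 \<le> D"
    and "\<forall>e\<in>A \<union> B. - D \<le> w e \<and> w e \<le> D"
  obtains t where "int (card A) + sum w A - sum w B
    \<le> (2 * D + 1) * (int (card {b\<in>B. w b \<le> t}) - int (card {a\<in>A. w a < t}))"
proof -
  define f where "f t = int (card {b\<in>B. w b \<le> t}) - int (card {a\<in>A. w a < t})" for t
  obtain t where "\<forall>s\<in>{-D..D}. f s \<le> f t"
    using exists_max_on_finite[of "{-D..D}" f] assms(4) by auto
  then have "sum f {-D..D} \<le> (2 * D + 1) * f t"
    using sum_bounded_above[of "{-D..D}" f "f t"] assms(4) by simp
  moreover have "sum f {-D..D} = int (card A) + sum w A - sum w B"
    unfolding f_def sum_subtractf using assms
    by (simp add: sum_card_weight_le sum_card_weight_less algebra_simps)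
  ultimately show ?thesis using that unfolding f_def by simp
qed

lemma divide_square_le_of_le_mult:
  fixes x d c :: real
  assumes "x \<le> d * c" "1 \<le> d" "0 \<le> c"
  shows "x / d^2 \<le> c"
proof -
  have "d * 1 \<le> d * d" using assms(2) by (intro mult_left_mono) auto
  then have "d * c \<le> d^2 * c" using assms(3) by (intro mult_right_mono) (auto simp: power2_eq_square)
  then have "x \<le> d^2 * c" using assms(1) by linarith
  then show ?thesis using assms(2) by (simp add: divide_le_eq mult.commute)
qed

theorem lemma8:
  fixes E :: "'a set" and indep :: "'a set \<Rightarrow> bool" and w :: "'a \<Rightarrow> int"
    and \<Delta> :: nat and \<mu> :: real and A B :: "'a set" and k :: nat
  assumes "matroid E indep"
    and "\<forall>e\<in>E. - int \<Delta> \<le> w e \<and> w e \<le> int \<Delta>"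
    and "\<mu> \<ge> 0"
    and "indep A" and "indep B" and "A \<inter> B = {}"
    and "card A = k" and "card B = k"
    and "\<bar>real_of_int (sum w A - sum w B)\<bar> \<le> \<mu>"
  shows "\<exists>A' B'. A' \<subseteq> A \<and> B' \<subseteq> B \<and> card A' = card B' \<and>
           indep ((A - A') \<union> B') \<and>
           real (card A') \<ge> (real k - \<mu>) / (2 * real \<Delta> + 1)^2 \<and>
           (\<forall>a\<in>A'. \<forall>b\<in>B'. w a \<ge> w b)"
proof -
  note M = assms(1)
  have finA: "finite A" and finB: "finite B"
    using matroid_indep_finite[OF M] assms(4,5) by auto
  have "A \<union> B \<subseteq> E" using matroid_indep_subset_ground[OF M] assms(4,5) by blast
  then have bounds: "\<forall>e\<in>A \<union> B. - int \<Delta> \<le> w e \<and> w e \<le> int \<Delta>" using assms(2) by blast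
  obtain t where t: "int k + sum w A - sum w B
      \<le> (2 * int \<Delta> + 1) * (int (card {b\<in>B. w b \<le> t}) - int (card {a\<in>A. w a < t}))"
    using exists_good_threshold[OF finA finB _ _ bounds] assms(7,8) by auto
  obtain A' B' where exchange: "A' \<subseteq> A" "B' \<subseteq> B" "card A' = card B'"
      "indep ((A - A') \<union> B')" "\<forall>a\<in>A'. \<forall>b\<in>B'. w b \<le> w a"
    and gain: "int (card {b\<in>B. w b \<le> t}) - int (card {a\<in>A. w a < t}) \<le> int (card A')"
    by (rule matroid_threshold_exchange[OF M assms(4,5), where w = w and t = t])
      (use assms(7,8) in simp_all)
  have "int k + (sum w A - sum w B) \<le> (2 * int \<Delta> + 1) * int (card A')"
    using t mult_left_mono[OF gain, of "2 * int \<Delta> + 1"] by linarith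
  then have "real_of_int (int k + (sum w A - sum w B)) \<le> real_of_int ((2 * int \<Delta> + 1) * int (card A'))"
    by (simp only: of_int_le_iff)
  then have "real k + real_of_int (sum w A - sum w B) \<le> (2 * real \<Delta> + 1) * real (card A')"
    by simp
  then have "(real k - \<mu>) / (2 * real \<Delta> + 1)^2 \<le> real (card A')"
    using assms(9) by (intro divide_square_le_of_le_mult) auto
  with exchange show ?thesis by blast
qed

end
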